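(* A filtered vector space $(V,\ell)$ satisfies the best approximation property if and only if $\ell(V\setminus\{0\})$ is a well-ordered subset of $\mathbb{R}$.
   Context: A filtered vector space over a field $\kappa$ is a pair $(V,\ell)$ with $V$ a $\kappa$-vector space and $\ell\colon V\to\mathbb{R}\cup\{-\infty\}$ such that $\ell(v)=-\infty$ iff $v=0$, $\ell(cv)=\ell(v)$ for $c\in\kappa\setminus\{0\}$, and $\ell(v+w)\le\max\{\ell(v),\ell(w)\}$. $(V,\ell)$ satisfies the best approximation property if for every proper subspace $W\subsetneq V$ and every $v\in V\setminus W$ there is $w_0\in W$ with $\ell(v-w_0)\le\ell(v-w)$ for all $w\in W$. *)

theory Defs
  imports Main "HOL-Library.Extended_Real"
begin

text \<open>A filtered vector space: the whole type 'v is a vector space over the field 'k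
  (scalar multiplication scale), and l takes values in the reals together with -infinity
  (modelled in ereal, never +infinity).\<close>
definition filtered_vector_space ::
  "('k::field \<Rightarrow> 'v::ab_group_add \<Rightarrow> 'v) \<Rightarrow> ('v \<Rightarrow> ereal) \<Rightarrow> bool" where
  "filtered_vector_space scale l \<longleftrightarrow>
     vector_space scale \<and>
     (\<forall>v. l v \<noteq> \<infinity>) \<and>
     (\<forall>v. l v = -\<infinity> \<longleftrightarrow> v = 0) \<and>
     (\<forall>c v. c \<noteq> 0 \<longrightarrow> l (scale c v) = l v) \<and>
     (\<forall>v w. l (v + w) \<le> max (l v) (l w))"

definition best_approximation_property ::
  "('k::field \<Rightarrow> 'v::ab_group_add \<Rightarrow> 'v) \<Rightarrow> ('v \<Rightarrow> ereal) \<Rightarrow> bool" where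
  "best_approximation_property scale l \<longleftrightarrow>
     (\<forall>W. module.subspace scale W \<and> W \<noteq> UNIV \<longrightarrow>
        (\<forall>v. v \<notin> W \<longrightarrow> (\<exists>w0\<in>W. \<forall>w\<in>W. l (v - w0) \<le> l (v - w))))"

definition well_ordered_real_set :: "real set \<Rightarrow> bool" where
  "well_ordered_real_set S \<longleftrightarrow>
     (\<forall>T. T \<subseteq> S \<and> T \<noteq> {} \<longrightarrow> (\<exists>m\<in>T. \<forall>t\<in>T. m \<le> t))"

end

theory Submission
  imports Defs
begin

text \<open>If the values are well-ordered, a best approximation of \<open>v\<close> from \<open>W\<close> is a \<open>w\<close> minimising
  \<open>l (v - w)\<close>, a least element of a nonempty set of values. Conversely, take vectors \<open>x\<^sub>n\<close>
  whose values strictly decrease. Vectors with pairwise distinct values cannot cancel in a linear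
  combination, so the \<open>x\<^sub>n\<close> are independent and every nonzero vector of their span has the value of
  some \<open>x\<^sub>k\<close>. Hence \<open>x\<^sub>0\<close> lies outside \<open>W = span {x\<^sub>0 - x\<^sub>n}\<close>, and every candidate \<open>x\<^sub>0 - w\<close> with
  value \<open>l (x\<^sub>k)\<close> is beaten by \<open>w = x\<^sub>0 - x\<^sub>k\<^sub>+\<^sub>1\<close>.\<close>

lemma decreasing_seq_if_not_well_ordered_real_set:
  assumes "\<not> well_ordered_real_set S"
  obtains r where "\<And>n. r n \<in> S" and "\<And>n. r (Suc n) < r n"
proof -
  let ?R = "{(a, b). a \<in> S \<and> b \<in> S \<and> a < b}"
  obtain T where T: "T \<subseteq> S" "T \<noteq> {}" and no_least: "\<And>m. m \<in> T \<Longrightarrow> \<exists>t\<in>T. t < m"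
    using assms unfolding well_ordered_real_set_def by (auto simp: not_le)
  have "\<not> wf ?R"
  proof
    assume "wf ?R"
    then obtain z where z: "z \<in> T" and minimal: "\<And>y. (y, z) \<in> ?R \<Longrightarrow> y \<notin> T"
      using T(2) by (meson wfE_min')
    obtain t where "t \<in> T" "t < z"
      using no_least[OF z] by blast
    with T(1) z minimal[of t] show False
      by blast
  qed
  then obtain r where "\<forall>n. (r (Suc n), r n) \<in> ?R"
    unfolding wf_iff_no_infinite_down_chain by blast
  then show thesis
    using that by auto
qed

lemma vector_space_field_mult: "vector_space ((*) :: 'k::field \<Rightarrow> 'k \<Rightarrow> 'k)"
  by unfold_locales (simp_all add: algebra_simps)

context vector_space
begin

text \<open>The linear form sending every vector of \<open>B\<close> to \<open>1\<close> vanishes on the differences.\<close>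

lemma not_in_span_differences:
  assumes "independent B" and "a \<in> B"
  shows "a \<notin> span ((\<lambda>b. a - b) ` B)"
proof
  assume a: "a \<in> span ((\<lambda>b. a - b) ` B)"
  interpret pair: vector_space_pair scale "(*) :: 'a \<Rightarrow> 'a \<Rightarrow> 'a"
    by (intro vector_space_pair.intro vector_space_axioms vector_space_field_mult)
  obtain \<phi> where \<phi>: "Vector_Spaces.linear scale (*) \<phi>" "\<forall>b\<in>B. \<phi> b = 1"
    using pair.linear_independent_extend[OF assms(1), of "\<lambda>_. 1"] by blast
  have "span ((\<lambda>b. a - b) ` B) \<subseteq> {x. \<phi> x = 0}"
    using \<phi> assms(2) by (intro span_minimal) (auto simp: pair.linear_diff pair.linear_subspace_kernel)
  with a \<phi> assms(2) show False
    by auto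
qed

end

locale filtered_space = vector_space scale
  for scale :: "'k::field \<Rightarrow> 'v::ab_group_add \<Rightarrow> 'v" +
  fixes l :: "'v \<Rightarrow> ereal"
  assumes l_neq_infinity: "l v \<noteq> \<infinity>"
    and l_eq_minus_infinity_iff: "l v = -\<infinity> \<longleftrightarrow> v = 0"
    and l_scale: "c \<noteq> 0 \<Longrightarrow> l (scale c v) = l v"
    and l_add_le_max: "l (v + w) \<le> max (l v) (l w)"
begin

abbreviation value_set :: "real set" where
  "value_set \<equiv> {r. \<exists>v. v \<noteq> 0 \<and> l v = ereal r}"

lemma l_eq_ereal_if_nonzero: "v \<noteq> 0 \<Longrightarrow> \<exists>r. l v = ereal r"
  using l_neq_infinity[of v] l_eq_minus_infinity_iff[of v] by (cases "l v") auto

lemma l_uminus: "l (- v) = l v"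
  using l_scale[of "-1" v] by simp

lemma l_add_eq_if_less:
  assumes "l a < l b"
  shows "l (a + b) = l b"
proof (rule antisym)
  show "l (a + b) \<le> l b"
    using l_add_le_max[of a b] assms by simp
  have "l b \<le> max (l (a + b)) (l (- a))"
    using l_add_le_max[of "a + b" "- a"] by simp
  then show "l b \<le> l (a + b)"
    using assms l_uminus[of a] by (auto simp: max_def split: if_splits)
qed

lemma l_sum_eq_term:
  assumes "finite F" and "inj_on l F" and "\<exists>v\<in>F. c v \<noteq> 0"
  shows "\<exists>v\<in>F. c v \<noteq> 0 \<and> l (\<Sum>u\<in>F. scale (c u) u) = l v"
  using assms
proof (induction F rule: finite_induct)
  case empty
  then show ?case by simp
next
  case (insert a F)
  have sum: "(\<Sum>u\<in>insert a F. scale (c u) u) = scale (c a) a + (\<Sum>u\<in>F. scale (c u) u)"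
    using insert.hyps by simp
  have inj: "inj_on l F" and new_value: "l a \<notin> l ` F"
    using insert.prems(1) insert.hyps(2) by auto
  show ?case
  proof (cases "\<exists>v\<in>F. c v \<noteq> 0")
    case False
    then have "(\<Sum>u\<in>F. scale (c u) u) = 0"
      by (intro sum.neutral) simp
    then show ?thesis
      using sum False insert.prems(2) l_scale by auto
  next
    case True
    let ?s = "\<Sum>u\<in>F. scale (c u) u"
    obtain v where v: "v \<in> F" "c v \<noteq> 0" "l ?s = l v"
      using insert.IH[OF inj True] by blast
    show ?thesis
    proof (cases "c a = 0")
      case True
      then show ?thesis using sum v by auto
    next
      case False
      have "l a \<noteq> l v"
        using new_value v(1) by blast
      then consider "l (scale (c a) a) < l ?s" | "l ?s < l (scale (c a) a)"
        using v(3) l_scale[OF False] by (metis linorder_neqE)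
      then show ?thesis
      proof cases
        case 1
        then show ?thesis
          using sum v l_add_eq_if_less by auto
      next
        case 2
        then have "l (?s + scale (c a) a) = l (scale (c a) a)"
          by (rule l_add_eq_if_less)
        then have "l (\<Sum>u\<in>insert a F. scale (c u) u) = l a"
          using sum l_scale[OF False] by (simp add: add.commute)
        with False show ?thesis
          by blast
      qed
    qed
  qed
qed

lemma l_in_image_if_in_span:
  assumes "inj_on l B" and "v \<in> span B" and "v \<noteq> 0"
  shows "l v \<in> l ` B"
proof -
  obtain t r where t: "finite t" "t \<subseteq> B" and v: "v = (\<Sum>a\<in>t. scale (r a) a)"
    using assms(2) unfolding span_explicit by blast
  have "\<exists>a\<in>t. r a \<noteq> 0"
    using assms(3) v by (auto intro: sum.neutral)
  then obtain a where "a \<in> t" "l v = l a"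
    using l_sum_eq_term[OF t(1) inj_on_subset[OF assms(1) t(2)]] v by blast
  with t(2) show ?thesis
    by auto
qed

lemma independent_if_inj_on_l:
  assumes "inj_on l B" and "0 \<notin> B"
  shows "independent B"
  unfolding dependent_def
proof
  assume "\<exists>a\<in>B. a \<in> span (B - {a})"
  then obtain a where a: "a \<in> B" "a \<in> span (B - {a})"
    by blast
  then have "l a \<in> l ` (B - {a})"
    using assms by (intro l_in_image_if_in_span) (auto intro: inj_on_subset)
  with a(1) assms(1) show False
    by (auto simp: inj_on_def)
qed

lemma l_attains_min:
  assumes "well_ordered_real_set value_set" and "A \<noteq> {}" and "0 \<notin> A"
  shows "\<exists>a\<in>A. \<forall>b\<in>A. l a \<le> l b"
proof -
  let ?T = "{r. \<exists>a\<in>A. l a = ereal r}"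
  have nonzero: "a \<in> A \<Longrightarrow> a \<noteq> 0" for a
    using assms(3) by blast
  have "?T \<subseteq> value_set"
    using nonzero by blast
  moreover obtain a where "a \<in> A"
    using assms(2) by blast
  then have "?T \<noteq> {}"
    using l_eq_ereal_if_nonzero[OF nonzero] by blast
  ultimately obtain m where m: "m \<in> ?T" "\<forall>t\<in>?T. m \<le> t"
    using assms(1) unfolding well_ordered_real_set_def by blast
  then obtain a where a: "a \<in> A" "l a = ereal m"
    by blast
  have "l a \<le> l b" if b: "b \<in> A" for b
  proof -
    obtain t where t: "l b = ereal t"
      using l_eq_ereal_if_nonzero[OF nonzero[OF b]] by blast
    with b m(2) have "m \<le> t"
      by blast
    with a(2) t show ?thesis
      by simp
  qed
  with a(1) show ?thesis
    by blast
qed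

lemma best_approximation_if_well_ordered:
  assumes "well_ordered_real_set value_set"
  shows "best_approximation_property scale l"
  unfolding best_approximation_property_def
proof (intro allI impI)
  fix W v
  assume "subspace W \<and> W \<noteq> UNIV" and "v \<notin> W"
  then have "(\<lambda>w. v - w) ` W \<noteq> {}" and "0 \<notin> (\<lambda>w. v - w) ` W"
    using subspace_0 by auto
  then have "\<exists>a\<in>(\<lambda>w. v - w) ` W. \<forall>b\<in>(\<lambda>w. v - w) ` W. l a \<le> l b"
    by (rule l_attains_min[OF assms])
  then obtain a where a: "a \<in> (\<lambda>w. v - w) ` W" and minimal: "\<forall>b\<in>(\<lambda>w. v - w) ` W. l a \<le> l b"
    by (rule bexE)
  from a obtain w0 where "w0 \<in> W" "a = v - w0"
    by blast
  with minimal show "\<exists>w0\<in>W. \<forall>w\<in>W. l (v - w0) \<le> l (v - w)"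
    by auto
qed

lemma not_best_approximation_if_decreasing:
  assumes decreasing: "\<And>n. l (x (Suc n)) < l (x n)"
  shows "\<not> best_approximation_property scale l"
proof
  assume best: "best_approximation_property scale l"
  have less: "l (x n) < l (x m)" if "m < n" for m n
  proof -
    have "l (x n) \<le> l (x (Suc m))"
      using lift_Suc_antimono_le[of "\<lambda>n. l (x n)", OF less_imp_le[OF decreasing]] that
      by (simp add: Suc_le_eq)
    also have "\<dots> < l (x m)"
      by (rule decreasing)
    finally show ?thesis .
  qed
  have "inj (l \<circ> x)"
    by (rule linorder_injI) (auto dest: less)
  then have inj: "inj_on l (range x)"
    by (rule inj_on_imageI)
  have "x n \<noteq> 0" for n
    using decreasing[of n] l_eq_minus_infinity_iff[of "x n"] by auto
  then have "0 \<notin> range x"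
    by (metis rangeE)
  with inj have independent: "independent (range x)"
    by (rule independent_if_inj_on_l)
  define W where "W = span ((\<lambda>b. x 0 - b) ` range x)"
  have x0: "x 0 \<notin> W"
    unfolding W_def by (rule not_in_span_differences[OF independent]) simp
  moreover have "subspace W"
    unfolding W_def by (rule subspace_span)
  ultimately have "\<exists>w0\<in>W. \<forall>w\<in>W. l (x 0 - w0) \<le> l (x 0 - w)"
    using best unfolding best_approximation_property_def by blast
  then obtain w0 where w0: "w0 \<in> W" and minimal: "\<forall>w\<in>W. l (x 0 - w0) \<le> l (x 0 - w)"
    by (rule bexE)
  have "W \<subseteq> span (range x)"
    unfolding W_def by (intro span_minimal) (auto intro: span_diff span_base)
  then have "x 0 - w0 \<in> span (range x)"
    using w0 by (auto intro: span_diff span_base)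
  moreover have "x 0 - w0 \<noteq> 0"
    using x0 w0 by auto
  ultimately obtain k where k: "l (x 0 - w0) = l (x k)"
    using l_in_image_if_in_span[OF inj] by blast
  have "x 0 - x (Suc k) \<in> W"
    unfolding W_def by (rule span_base) simp
  then have "l (x 0 - w0) \<le> l (x 0 - (x 0 - x (Suc k)))"
    using minimal by blast
  with k decreasing[of k] show False
    by simp
qed

lemma decreasing_values_if_not_well_ordered:
  assumes "\<not> well_ordered_real_set value_set"
  obtains x where "\<And>n. l (x (Suc n)) < l (x n)"
proof -
  obtain r where r: "\<And>n. r n \<in> value_set" "\<And>n. r (Suc n) < r n"
    using decreasing_seq_if_not_well_ordered_real_set[OF assms] by blast
  then have "\<forall>n. \<exists>v. l v = ereal (r n)"
    by blast
  then obtain x where x: "\<And>n. l (x n) = ereal (r n)"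
    by metis
  show thesis
    by (rule that[of x]) (simp add: x r(2))
qed

theorem best_approximation_iff_well_ordered:
  "best_approximation_property scale l \<longleftrightarrow> well_ordered_real_set value_set"
proof
  assume best: "best_approximation_property scale l"
  show "well_ordered_real_set value_set"
  proof (rule ccontr)
    assume "\<not> well_ordered_real_set value_set"
    then obtain x where "\<And>n. l (x (Suc n)) < l (x n)"
      using decreasing_values_if_not_well_ordered by blast
    with best show False
      using not_best_approximation_if_decreasing by blast
  qed
qed (rule best_approximation_if_well_ordered)

end

lemma filtered_space_if_filtered_vector_space:
  assumes "filtered_vector_space scale l"
  shows "filtered_space scale l"
  using assms
  unfolding filtered_vector_space_def filtered_space_def filtered_space_axioms_def by simp

theorem proposition3p5:
  fixes scale :: "'k::field \<Rightarrow> 'v::ab_group_add \<Rightarrow> 'v" and l :: "'v \<Rightarrow> ereal"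
  assumes "filtered_vector_space scale l"
  shows "best_approximation_property scale l \<longleftrightarrow>
         well_ordered_real_set {r. \<exists>v. v \<noteq> 0 \<and> l v = ereal r}"
proof -
  interpret filtered_space scale l
    using assms by (rule filtered_space_if_filtered_vector_space)
  show ?thesis
    by (rule best_approximation_iff_well_ordered)
qed

end
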